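(* Let $f,g:\mathbb{F}_2^N\to\mathbb{F}_2$. Then $$\langle f,g\rangle^8\le\mathbb{E}_{y,z\in\mathbb{F}_2^N}\langle f_{y,z},g_{y,z}\rangle^2.$$
   Context: $\langle f,g\rangle=\mathbb{E}_{x\in\mathbb{F}_2^N}(-1)^{f(x)+g(x)}$, $f_y(x)=f(x+y)-f(x)$, and $f_{y,z}=(f_y)_z$. *)

theory Defs
  imports Complex_Main
begin

text \<open>F_2 is modelled by bool (addition = xor, written as \<noteq>).
  F_2^N is modelled as the finite set of functions nat \<Rightarrow> bool supported in {..<N}.\<close>

definition cube :: "nat \<Rightarrow> (nat \<Rightarrow> bool) set" where
  "cube N = {x. \<forall>i\<ge>N. \<not> x i}"

definition vadd :: "(nat \<Rightarrow> bool) \<Rightarrow> (nat \<Rightarrow> bool) \<Rightarrow> (nat \<Rightarrow> bool)" where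
  "vadd x y = (\<lambda>i. x i \<noteq> y i)"

definition expect :: "nat \<Rightarrow> ((nat \<Rightarrow> bool) \<Rightarrow> real) \<Rightarrow> real" where
  "expect N h = (\<Sum>x\<in>cube N. h x) / real (card (cube N))"

text \<open>(-1)^(a+b) for a, b in F_2.\<close>
definition sgn2 :: "bool \<Rightarrow> bool \<Rightarrow> real" where
  "sgn2 a b = (if a = b then 1 else -1)"

definition ip :: "nat \<Rightarrow> ((nat \<Rightarrow> bool) \<Rightarrow> bool) \<Rightarrow> ((nat \<Rightarrow> bool) \<Rightarrow> bool) \<Rightarrow> real" where
  "ip N f g = expect N (\<lambda>x. sgn2 (f x) (g x))"

text \<open>f_y(x) = f(x+y) - f(x) (subtraction in F_2 is xor).\<close>
definition dlt :: "((nat \<Rightarrow> bool) \<Rightarrow> bool) \<Rightarrow> (nat \<Rightarrow> bool) \<Rightarrow> ((nat \<Rightarrow> bool) \<Rightarrow> bool)" where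
  "dlt f y = (\<lambda>x. f (vadd x y) \<noteq> f x)"

end

theory Submission
  imports Defs
begin

(* Put h = (-1)^(f+g) and write D_y h (x) = h(x+y) h(x) for the multiplicative derivative.
   Then <f,g> = E h and <f_{y,z}, g_{y,z}> = E D_z D_y h. By translation invariance
   E_y E D_y h = (E h)^2 for every h, so
   (E h)^8 = (E_y E D_y h)^4 <= (E_y (E D_y h)^2)^2 = (E_y E_z E D_z D_y h)^2,
   and two more applications of (E X)^2 <= E X^2 finish the proof. *)

lemma finite_cube: "finite (cube N)"
proof -
  have "cube N \<subseteq> (\<lambda>S i. i \<in> S) ` Pow {..<N}"
  proof
    fix x assume "x \<in> cube N"
    hence "x = (\<lambda>i. i \<in> {i. i < N \<and> x i})"
      by (auto simp: cube_def fun_eq_iff not_less[symmetric])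
    thus "x \<in> (\<lambda>S i. i \<in> S) ` Pow {..<N}" by blast
  qed
  thus ?thesis by (rule finite_subset) auto
qed

lemma card_cube_pos: "card (cube N) > 0"
proof -
  have "(\<lambda>_. False) \<in> cube N" by (simp add: cube_def)
  thus ?thesis using finite_cube by (auto simp: card_gt_0_iff)
qed

lemma vadd_in_cube: "x \<in> cube N \<Longrightarrow> y \<in> cube N \<Longrightarrow> vadd x y \<in> cube N"
  by (auto simp: cube_def vadd_def)

lemma vadd_commute: "vadd x y = vadd y x"
  by (auto simp: vadd_def fun_eq_iff)

lemma vadd_vadd_cancel: "vadd (vadd x a) a = x"
  by (auto simp: vadd_def fun_eq_iff)

lemma expect_translate:
  assumes "a \<in> cube N"
  shows "expect N (\<lambda>x. \<phi> (vadd x a)) = expect N \<phi>"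
proof -
  have "bij_betw (\<lambda>x. vadd x a) (cube N) (cube N)"
    by (rule bij_betw_byWitness[where f'="\<lambda>x. vadd x a"])
       (auto simp: vadd_vadd_cancel vadd_in_cube assms)
  hence "(\<Sum>x\<in>cube N. \<phi> (vadd x a)) = (\<Sum>x\<in>cube N. \<phi> x)"
    by (rule sum.reindex_bij_betw)
  thus ?thesis unfolding expect_def by simp
qed

lemma expect_cong: "(\<And>x. x \<in> cube N \<Longrightarrow> \<phi> x = \<psi> x) \<Longrightarrow> expect N \<phi> = expect N \<psi>"
  unfolding expect_def by (metis (no_types, lifting) sum.cong)

lemma expect_mult_left: "expect N (\<lambda>x. c * \<phi> x) = c * expect N \<phi>"
  unfolding expect_def by (simp add: sum_distrib_left)

lemma expect_swap: "expect N (\<lambda>y. expect N (\<lambda>x. F x y)) = expect N (\<lambda>x. expect N (\<lambda>y. F x y))"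
  unfolding expect_def sum_divide_distrib[symmetric] by (subst sum.swap) (rule refl)

lemma expect_mono: "(\<And>x. x \<in> cube N \<Longrightarrow> \<phi> x \<le> \<psi> x) \<Longrightarrow> expect N \<phi> \<le> expect N \<psi>"
  unfolding expect_def by (intro divide_right_mono sum_mono) auto

lemma expect_square_le: "(expect N X)^2 \<le> expect N (\<lambda>x. (X x)^2)"
proof -
  let ?S = "cube N" let ?n = "real (card ?S)"
  define m where "m = expect N X"
  have n: "?n > 0" using card_cube_pos by simp
  have sum_X: "(\<Sum>x\<in>?S. X x) = ?n * m" using n by (simp add: m_def expect_def)
  have "0 \<le> (\<Sum>x\<in>?S. (X x - m)^2)" by (simp add: sum_nonneg)
  also have "\<dots> = (\<Sum>x\<in>?S. (X x)^2) - 2 * m * (\<Sum>x\<in>?S. X x) + ?n * m^2"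
    by (simp add: power2_diff sum.distrib sum_subtractf sum_distrib_left ac_simps)
  finally have "?n * m^2 \<le> (\<Sum>x\<in>?S. (X x)^2)"
    using sum_X by (simp add: power2_eq_square algebra_simps)
  hence "m^2 \<le> (\<Sum>x\<in>?S. (X x)^2) / ?n" using n by (simp add: pos_le_divide_eq mult.commute)
  thus ?thesis by (simp add: m_def expect_def)
qed

definition mdiff :: "((nat \<Rightarrow> bool) \<Rightarrow> real) \<Rightarrow> (nat \<Rightarrow> bool) \<Rightarrow> (nat \<Rightarrow> bool) \<Rightarrow> real" where
  "mdiff h y = (\<lambda>x. h (vadd x y) * h x)"

lemma expect_expect_mdiff: "expect N (\<lambda>y. expect N (mdiff h y)) = (expect N h)^2"
proof -
  have inner: "expect N (\<lambda>y. mdiff h y x) = h x * expect N h" if x: "x \<in> cube N" for x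
  proof -
    have "expect N (\<lambda>y. mdiff h y x) = expect N (\<lambda>y. h x * h (vadd y x))"
      by (rule expect_cong) (simp add: mdiff_def vadd_commute mult.commute)
    also have "\<dots> = h x * expect N h"
      by (simp only: expect_mult_left expect_translate[OF x])
    finally show ?thesis .
  qed
  have "expect N (\<lambda>y. expect N (mdiff h y)) = expect N (\<lambda>x. expect N (\<lambda>y. mdiff h y x))"
    by (rule expect_swap)
  also have "\<dots> = expect N (\<lambda>x. expect N h * h x)"
    by (rule expect_cong) (simp add: inner mult.commute)
  also have "\<dots> = (expect N h)^2"
    by (simp only: expect_mult_left power2_eq_square)
  finally show ?thesis .
qed

lemma sgn2_dlt: "(\<lambda>x. sgn2 (dlt f y x) (dlt g y x)) = mdiff (\<lambda>x. sgn2 (f x) (g x)) y"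
  by (auto simp: sgn2_def dlt_def mdiff_def fun_eq_iff)

theorem corollary4p2:
  fixes N :: nat and f g :: "(nat \<Rightarrow> bool) \<Rightarrow> bool"
  shows "(ip N f g) ^ 8 \<le>
    expect N (\<lambda>y. expect N (\<lambda>z. (ip N (dlt (dlt f y) z) (dlt (dlt g y) z)) ^ 2))"
proof -
  define h where "h = (\<lambda>x. sgn2 (f x) (g x))"
  define B where "B = (\<lambda>y. expect N (mdiff h y))"
  define A where "A = (\<lambda>y z. expect N (mdiff (mdiff h y) z))"
  have ip_dlt_dlt: "ip N (dlt (dlt f y) z) (dlt (dlt g y) z) = A y z" for y z
    by (simp add: ip_def A_def h_def sgn2_dlt)
  have "(ip N f g)^8 = ((expect N B)^2)^2"
    by (simp add: ip_def B_def expect_expect_mdiff flip: h_def power_mult)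
  also have "\<dots> \<le> (expect N (\<lambda>y. (B y)^2))^2"
    by (intro power_mono expect_square_le) simp
  also have "expect N (\<lambda>y. (B y)^2) = expect N (\<lambda>y. expect N (A y))"
    by (simp add: A_def B_def expect_expect_mdiff)
  also have "(\<dots>)^2 \<le> expect N (\<lambda>y. (expect N (A y))^2)"
    by (rule expect_square_le)
  also have "\<dots> \<le> expect N (\<lambda>y. expect N (\<lambda>z. (A y z)^2))"
    by (intro expect_mono expect_square_le)
  finally show ?thesis unfolding ip_dlt_dlt .
qed

end
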